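(* Let $P,Q,R$ be unary predicate symbols and $S$ a $0$-ary predicate symbol, and let $$\Gamma = \forall x\, \exists y\, (Py \wedge (Qy \rightarrow Rx)) \wedge \neg \forall x\, Rx, \qquad \Delta = \forall x\, (Px \rightarrow (Qx \vee S)) \rightarrow S.$$ Then the second-order implication $\exists R\,\Gamma\rightarrow\forall S\,\Delta$ is valid in all G-models (for the interpretation of $P,Q$ given by the model): at every state of every G-model it is forced.
   Context: $\neg A$ abbreviates $A\rightarrow\perp$. A G-model is $\mathcal{M}=\langle W,\le,v_0,D,\phi\rangle$: $W$ a nonempty set of states, $\le$ a reflexive transitive relation on $W$, $v_0\in W$ with $v_0\le v$ for all $v\in W$, $D$ a nonempty domain, and for each $k$-ary predicate symbol $P$ a set $\phi(P)\subseteq W\times D^k$ that is monotone: if $v\le w$ and $\langle v,a_1,\dots,a_k\rangle\in\phi(P)$ then $\langle w,a_1,\dots,a_k\rangle\in\phi(P)$. Forcing between states and sentences with constants $\mathbf a$ for elements $a\in D$: $v\Vdash P\mathbf a_1\dots\mathbf a_k$ iff $\langle v,a_1,\dots,a_k\rangle\in\phi(P)$; $\wedge,\vee$ are evaluated pointwise; $v\Vdash A\rightarrow B$ iff for all $w\ge v$, $w\Vdash A$ implies $w\Vdash B$; $\perp$ is never forced; $v\Vdash\exists x A$ iff $v\Vdash A[\mathbf a/x]$ for some $a\in D$; $v\Vdash\forall xA$ iff $v\Vdash A[\mathbf a/x]$ for all $a\in D$. Second-order quantifiers over a $k$-ary predicate variable range over monotone subsets of $W\times D^k$ (for $k=0$: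 upward-closed subsets of $W$): $v\Vdash\exists R\,A$ iff there is a monotone $R'\subseteq W\times D$ such that $v\Vdash A$ in the model obtained by interpreting $R$ as $R'$; $v\Vdash\forall S\,A$ iff for every upward-closed $S'\subseteq W$, $v\Vdash A$ in the model obtained by interpreting $S$ as $S'$. Implication between such formulas is forced as in the first-order clause. *)

theory Defs
  imports Main
begin

text \<open>Ex2 p k A and All2 p k A quantify
  over the k-ary predicate variable p.\<close>

datatype form =
    Atom string "nat list"
  | Bot
  | Conj form form
  | Disj form form
  | Imp form form
  | Ex nat form
  | All nat form
  | Ex2 string nat form
  | All2 string nat form

definition Neg :: "form \<Rightarrow> form" where
  "Neg A = Imp A Bot"

definition mono_rel ::
  "'w set \<Rightarrow> ('w \<Rightarrow> 'w \<Rightarrow> bool) \<Rightarrow> 'd set \<Rightarrow> nat \<Rightarrow> ('w \<Rightarrow> 'd list \<Rightarrow> bool) \<Rightarrow> bool" where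
  "mono_rel W le D k R \<longleftrightarrow>
     (\<forall>v\<in>W. \<forall>w\<in>W. \<forall>as. length as = k \<and> set as \<subseteq> D \<and> le v w \<and> R v as \<longrightarrow> R w as)"

definition gmodel ::
  "'w set \<Rightarrow> ('w \<Rightarrow> 'w \<Rightarrow> bool) \<Rightarrow> 'w \<Rightarrow> 'd set \<Rightarrow> (string \<Rightarrow> nat)
    \<Rightarrow> (string \<Rightarrow> 'w \<Rightarrow> 'd list \<Rightarrow> bool) \<Rightarrow> bool" where
  "gmodel W le v0 D ar I \<longleftrightarrow>
     W \<noteq> {} \<and>
     (\<forall>v\<in>W. le v v) \<and>
     (\<forall>u\<in>W. \<forall>v\<in>W. \<forall>w\<in>W. le u v \<and> le v w \<longrightarrow> le u w) \<and>
     v0 \<in> W \<and> (\<forall>v\<in>W. le v0 v) \<and>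
     D \<noteq> {} \<and>
     (\<forall>p. mono_rel W le D (ar p) (I p))"

text \<open>Forcing relation.  The assignment e gives values in D to the individual
  variables (equivalent to substituting constants for elements of D).\<close>
primrec forces ::
  "'w set \<Rightarrow> ('w \<Rightarrow> 'w \<Rightarrow> bool) \<Rightarrow> 'd set \<Rightarrow> (string \<Rightarrow> 'w \<Rightarrow> 'd list \<Rightarrow> bool)
    \<Rightarrow> (nat \<Rightarrow> 'd) \<Rightarrow> 'w \<Rightarrow> form \<Rightarrow> bool" where
  "forces W le D I e v (Atom p xs) = I p v (map e xs)"
| "forces W le D I e v Bot = False"
| "forces W le D I e v (Conj A B) = (forces W le D I e v A \<and> forces W le D I e v B)"
| "forces W le D I e v (Disj A B) = (forces W le D I e v A \<or> forces W le D I e v B)"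
| "forces W le D I e v (Imp A B) =
     (\<forall>w\<in>W. le v w \<longrightarrow> forces W le D I e w A \<longrightarrow> forces W le D I e w B)"
| "forces W le D I e v (Ex x A) = (\<exists>a\<in>D. forces W le D I (e(x := a)) v A)"
| "forces W le D I e v (All x A) = (\<forall>a\<in>D. forces W le D I (e(x := a)) v A)"
| "forces W le D I e v (Ex2 p k A) =
     (\<exists>R. mono_rel W le D k R \<and> forces W le D (I(p := R)) e v A)"
| "forces W le D I e v (All2 p k A) =
     (\<forall>R. mono_rel W le D k R \<longrightarrow> forces W le D (I(p := R)) e v A)"

text \<open>The formulas of Corollary 3.1; individual variable x is 0, y is 1.\<close>
definition Gamma :: form where
  "Gamma = Conj
     (All 0 (Ex 1 (Conj (Atom ''P'' [1]) (Imp (Atom ''Q'' [1]) (Atom ''R'' [0])))))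
     (Neg (All 0 (Atom ''R'' [0])))"

definition Delta :: form where
  "Delta = Imp (All 0 (Imp (Atom ''P'' [0]) (Disj (Atom ''Q'' [0]) (Atom ''S'' []))))
               (Atom ''S'' [])"

end

theory Submission
  imports Defs
begin

text \<open>Suppose \<open>\<Gamma>\<close> is forced at \<open>w\<close> for some choice of \<open>R\<close>, and let \<open>u \<ge> w\<close> force the
  antecedent of \<open>\<Delta>\<close> but not \<open>S\<close>.  For every \<open>a\<close>, \<open>\<Gamma>\<close> provides a \<open>b\<close> with \<open>P b\<close> at \<open>w\<close>,
  hence at \<open>u\<close>; the antecedent of \<open>\<Delta>\<close> at \<open>u\<close> itself then yields \<open>Q b\<close>, and so \<open>R a\<close> at \<open>u\<close>.
  Thus \<open>\<forall>x R x\<close> holds at \<open>u\<close>, contradicting \<open>\<not>\<forall>x R x\<close>.\<close>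

lemma mono_rel_unaryD:
  assumes "mono_rel W le D 1 R" and "v \<in> W" "w \<in> W" "le v w" "a \<in> D" "R v [a]"
  shows "R w [a]"
  using assms unfolding mono_rel_def by (metis One_nat_def empty_subsetI insert_subset
      length_Cons list.set(1) list.set(2) list.size(3))

lemma forces_Gamma_iff:
  "forces W le D I e w Gamma \<longleftrightarrow>
     (\<forall>a\<in>D. \<exists>b\<in>D. I ''P'' w [b] \<and> (\<forall>t\<in>W. le w t \<longrightarrow> I ''Q'' t [b] \<longrightarrow> I ''R'' t [a])) \<and>
     (\<forall>t\<in>W. le w t \<longrightarrow> \<not> (\<forall>a\<in>D. I ''R'' t [a]))"
  by (simp add: Gamma_def Neg_def)

lemma forces_Delta_iff:
  "forces W le D I e w Delta \<longleftrightarrow>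
     (\<forall>u\<in>W. le w u \<longrightarrow>
        (\<forall>a\<in>D. \<forall>t\<in>W. le u t \<longrightarrow> I ''P'' t [a] \<longrightarrow> I ''Q'' t [a] \<or> I ''S'' t []) \<longrightarrow>
        I ''S'' u [])"
  by (simp add: Delta_def)

lemma forces_Gamma_imp_forces_Delta:
  assumes P_mono: "mono_rel W le D 1 (J ''P'')"
    and refl: "\<forall>u\<in>W. le u u"
    and same_P: "J' ''P'' = J ''P''" and same_Q: "J' ''Q'' = J ''Q''"
    and "w \<in> W"
    and Gamma: "forces W le D J e w Gamma"
  shows "forces W le D J' e' w Delta"
  unfolding forces_Delta_iff
proof (intro ballI impI)
  fix u
  assume u: "u \<in> W" "le w u"
    and antecedent: "\<forall>a\<in>D. \<forall>t\<in>W. le u t \<longrightarrow> J' ''P'' t [a] \<longrightarrow> J' ''Q'' t [a] \<or> J' ''S'' t []"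
  obtain witness: "\<forall>a\<in>D. \<exists>b\<in>D. J ''P'' w [b] \<and> (\<forall>t\<in>W. le w t \<longrightarrow> J ''Q'' t [b] \<longrightarrow> J ''R'' t [a])"
    and not_all_R: "\<forall>t\<in>W. le w t \<longrightarrow> \<not> (\<forall>a\<in>D. J ''R'' t [a])"
    using Gamma unfolding forces_Gamma_iff by blast
  show "J' ''S'' u []"
  proof (rule ccontr)
    assume no_S: "\<not> J' ''S'' u []"
    have "J ''R'' u [a]" if a: "a \<in> D" for a
    proof -
      obtain b where b: "b \<in> D" "J ''P'' w [b]"
        and Q_to_R: "\<forall>t\<in>W. le w t \<longrightarrow> J ''Q'' t [b] \<longrightarrow> J ''R'' t [a]"
        using witness a by blast
      have "J ''P'' u [b]"
        using mono_rel_unaryD[OF P_mono \<open>w \<in> W\<close> u b(1,2)] .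
      then have "J ''Q'' u [b]"
        using antecedent b(1) u(1) refl no_S same_P same_Q by metis
      then show ?thesis
        using Q_to_R u by blast
    qed
    then show False
      using not_all_R u by blast
  qed
qed

theorem corollary3p1:
  fixes W :: "'w set" and le :: "'w \<Rightarrow> 'w \<Rightarrow> bool" and v0 :: 'w
    and D :: "'d set" and ar :: "string \<Rightarrow> nat"
    and I :: "string \<Rightarrow> 'w \<Rightarrow> 'd list \<Rightarrow> bool" and e :: "nat \<Rightarrow> 'd"
  assumes "gmodel W le v0 D ar I"
    and "ar ''P'' = 1" and "ar ''Q'' = 1"
    and "v \<in> W"
  shows "forces W le D I e v (Imp (Ex2 ''R'' 1 Gamma) (All2 ''S'' 0 Delta))"
proof -
  have P_mono: "mono_rel W le D 1 (I ''P'')" and refl: "\<forall>u\<in>W. le u u"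
    using assms(1,2) unfolding gmodel_def by metis+
  show ?thesis
  proof (simp only: forces.simps, intro ballI impI allI)
    fix w S
    assume "w \<in> W"
      and "\<exists>R. mono_rel W le D 1 R \<and> forces W le D (I(''R'' := R)) e w Gamma"
    then obtain R where "forces W le D (I(''R'' := R)) e w Gamma" by blast
    with \<open>w \<in> W\<close> show "forces W le D (I(''S'' := S)) e w Delta"
      by (intro forces_Gamma_imp_forces_Delta[where J = "I(''R'' := R)"])
        (use P_mono refl in simp_all)
  qed
qed

end
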